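(* Let $b>0$ and $\varepsilon\in\mathbb R$ with $b+\varepsilon>0$ and $\varepsilon\neq0$. Then the matrix $P(b,\varepsilon,0)$ has two eigenvalues $\lambda_1,\lambda_2$ with $0<\lambda_1<1$ and $\lambda_2=\lambda_1^{-1}>1$, with corresponding eigenvectors $v_1=(1,f_1)^T$ and $v_2=(1,f_1^{-1})^T$, where $$f_1=\frac{-\alpha+\gamma-\sqrt{(\alpha-\gamma)^2-4\beta^2}}{2\beta}$$ satisfies $f_1<-1$ if $\varepsilon<0$ and $f_1\in(-1,0)$ if $\varepsilon>0$.
   Context: For $k\in\mathbb R$ let $A_1=\begin{pmatrix}-b&0\\-b&-(b+\varepsilon)e^{-ik}\end{pmatrix}$, $A_2=\begin{pmatrix}-b&-(b+\varepsilon)e^{ik}\\0&-b\end{pmatrix}$, $A_3=\begin{pmatrix}-(b+\varepsilon)e^{-ik}&0\\-b&-b\end{pmatrix}$, $A_4=\begin{pmatrix}-b&-b\\0&-(b+\varepsilon)\end{pmatrix}$, $A_5=\begin{pmatrix}-b&0\\-(b+\varepsilon)e^{ik}&-b\end{pmatrix}$, $A_6=\begin{pmatrix}-(b+\varepsilon)&-b\\0&-b\end{pmatrix}$, and $P(b,\varepsilon,k)=-A_6^{-1}A_5A_4^{-1}A_3A_2^{-1}A_1$. With $t=(b+\varepsilon)/b$, define $\alpha=-t^2+2t-\frac4t+\frac4{t^2}$, $\beta=-t^3+t^2+t-3+\frac2t$, $\gamma=t^4-t^2+2t-1$ (these are the entries of $P(b,\varepsilon,0)=\begin{pmatrix}\alpha&\beta\\-\beta&\gamma\end{pmatrix}$).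 *)

theory Defs
  imports "HOL-Analysis.Analysis"
begin

definition mat2 :: "complex \<Rightarrow> complex \<Rightarrow> complex \<Rightarrow> complex \<Rightarrow> complex^2^2" where
  "mat2 a b c d = vector [vector [a, b], vector [c, d]]"

definition A1 :: "real \<Rightarrow> real \<Rightarrow> real \<Rightarrow> complex^2^2" where
  "A1 b e k = mat2 (- of_real b) 0 (- of_real b) (- of_real (b + e) * exp (- \<i> * of_real k))"
definition A2 :: "real \<Rightarrow> real \<Rightarrow> real \<Rightarrow> complex^2^2" where
  "A2 b e k = mat2 (- of_real b) (- of_real (b + e) * exp (\<i> * of_real k)) 0 (- of_real b)"
definition A3 :: "real \<Rightarrow> real \<Rightarrow> real \<Rightarrow> complex^2^2" where
  "A3 b e k = mat2 (- of_real (b + e) * exp (- \<i> * of_real k)) 0 (- of_real b) (- of_real b)"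
definition A4 :: "real \<Rightarrow> real \<Rightarrow> real \<Rightarrow> complex^2^2" where
  "A4 b e k = mat2 (- of_real b) (- of_real b) 0 (- of_real (b + e))"
definition A5 :: "real \<Rightarrow> real \<Rightarrow> real \<Rightarrow> complex^2^2" where
  "A5 b e k = mat2 (- of_real b) 0 (- of_real (b + e) * exp (\<i> * of_real k)) (- of_real b)"
definition A6 :: "real \<Rightarrow> real \<Rightarrow> real \<Rightarrow> complex^2^2" where
  "A6 b e k = mat2 (- of_real (b + e)) (- of_real b) 0 (- of_real b)"

definition Pmat :: "real \<Rightarrow> real \<Rightarrow> real \<Rightarrow> complex^2^2" where
  "Pmat b e k = - (matrix_inv (A6 b e k) ** A5 b e k ** matrix_inv (A4 b e k) ** A3 b e k
                   ** matrix_inv (A2 b e k) ** A1 b e k)"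

definition tpar :: "real \<Rightarrow> real \<Rightarrow> real" where "tpar b e = (b + e) / b"

definition alpha :: "real \<Rightarrow> real \<Rightarrow> real" where
  "alpha b e = (let t = tpar b e in - (t ^ 2) + 2 * t - 4 / t + 4 / (t ^ 2))"
definition beta :: "real \<Rightarrow> real \<Rightarrow> real" where
  "beta b e = (let t = tpar b e in - (t ^ 3) + t ^ 2 + t - 3 + 2 / t)"
definition gamma :: "real \<Rightarrow> real \<Rightarrow> real" where
  "gamma b e = (let t = tpar b e in t ^ 4 - t ^ 2 + 2 * t - 1)"

definition f1 :: "real \<Rightarrow> real \<Rightarrow> real" where
  "f1 b e = (- alpha b e + gamma b e - sqrt ((alpha b e - gamma b e)^2 - 4 * (beta b e)^2))
            / (2 * beta b e)"

definition eigenvalues2 :: "complex^2^2 \<Rightarrow> complex set" where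
  "eigenvalues2 M = {\<mu>. \<exists>v. v \<noteq> 0 \<and> M *v v = \<mu> *s v}"

end

(* At k = 0 the transfer matrix is P = [[alpha, beta], [-beta, gamma]], and in terms of t the
   identities alpha * gamma + beta^2 = 1 and alpha + gamma - 2 = (t - 1)^2 q(t) / t^2 with q > 0 on
   t > 0 are polynomial. Hence the characteristic polynomial is mu^2 - (alpha + gamma) mu + 1, with
   reciprocal real roots lambda < 1 < 1/lambda and eigenvectors (1, (mu - alpha) / beta). The two
   slopes have product 1 and sum (gamma - alpha) / beta < 0, so both are negative, and f1 < -1
   exactly when f1 is the smaller slope, i.e. when beta > 0, i.e. when eps < 0. *)
theory Submission
  imports Defs
begin

lemma vec2_eq_iff: "(x::'a^2) = y \<longleftrightarrow> x$1 = y$1 \<and> x$2 = y$2"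
  by (simp add: vec_eq_iff forall_2)

lemma mat2_nth [simp]:
  "mat2 a b c d $ 1 $ 1 = a" "mat2 a b c d $ 1 $ 2 = b"
  "mat2 a b c d $ 2 $ 1 = c" "mat2 a b c d $ 2 $ 2 = d"
  by (simp_all add: mat2_def)

lemma mat2_eq_iff: "mat2 a b c d = mat2 a' b' c' d' \<longleftrightarrow> a = a' \<and> b = b' \<and> c = c' \<and> d = d'"
  by (metis mat2_nth)

lemma mat2_mult:
  "mat2 a b c d ** mat2 a' b' c' d' = mat2 (a*a' + b*c') (a*b' + b*d') (c*a' + d*c') (c*b' + d*d')"
  by (simp add: vec2_eq_iff matrix_matrix_mult_def sum_2)

lemma mat_1_eq_mat2: "mat 1 = mat2 1 0 0 1"
  by (simp add: vec2_eq_iff mat_def)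

lemma uminus_mat2: "- mat2 a b c d = mat2 (-a) (-b) (-c) (-d)"
  by (simp add: vec2_eq_iff)

lemma mat2_mult_vector: "mat2 a b c d *v v = vector [a * v$1 + b * v$2, c * v$1 + d * v$2]"
  by (simp add: vec2_eq_iff matrix_vector_mult_def sum_2)

lemma matrix_inv_unique:
  fixes A B :: "'a::semiring_1^'n^'n"
  assumes "A ** B = mat 1" "B ** A = mat 1"
  shows "matrix_inv A = B"
proof -
  let ?C = "matrix_inv A"
  have "A ** ?C = mat 1 \<and> ?C ** A = mat 1"
    unfolding matrix_inv_def by (rule someI[of _ B]) (use assms in auto)
  then have "?C = ?C ** (A ** B)" "?C ** A = mat 1"
    using assms by auto
  then show ?thesis
    by (metis matrix_mul_assoc matrix_mul_lid)
qed

lemma matrix_inv_mat2: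
  assumes "a*d - b*c \<noteq> 0"
  shows "matrix_inv (mat2 a b c d)
    = mat2 (d / (a*d - b*c)) (- b / (a*d - b*c)) (- c / (a*d - b*c)) (a / (a*d - b*c))"
  by (rule matrix_inv_unique)
    (use assms in \<open>simp_all add: mat2_mult mat_1_eq_mat2 mat2_eq_iff divide_simps\<close>)

lemma eigenvalues2_mat2:
  "eigenvalues2 (mat2 a b c d) = {\<mu>. \<mu>^2 - (a + d) * \<mu> + (a*d - b*c) = 0}"
proof (intro set_eqI iffI; simp)
  fix \<mu> assume "\<mu> \<in> eigenvalues2 (mat2 a b c d)"
  then obtain v where "v \<noteq> 0" and "mat2 a b c d *v v = \<mu> *s v"
    unfolding eigenvalues2_def by blast
  then have "v$1 \<noteq> 0 \<or> v$2 \<noteq> 0"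
    and "(a - \<mu>) * v$1 + b * v$2 = 0" and "c * v$1 + (d - \<mu>) * v$2 = 0"
    by (auto simp: vec2_eq_iff mat2_mult_vector algebra_simps)
  moreover have "(\<mu>^2 - (a + d) * \<mu> + (a*d - b*c)) * v$1
      = (d - \<mu>) * ((a - \<mu>) * v$1 + b * v$2) - b * (c * v$1 + (d - \<mu>) * v$2)"
    and "(\<mu>^2 - (a + d) * \<mu> + (a*d - b*c)) * v$2
      = (a - \<mu>) * (c * v$1 + (d - \<mu>) * v$2) - c * ((a - \<mu>) * v$1 + b * v$2)"
    by (simp_all add: algebra_simps power2_eq_square)
  ultimately show "\<mu>^2 - (a + d) * \<mu> + (a*d - b*c) = 0"
    by auto
next
  fix \<mu> assume char: "\<mu>^2 - (a + d) * \<mu> + (a*d - b*c) = 0"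
  have "\<exists>v. v \<noteq> 0 \<and> mat2 a b c d *v v = \<mu> *s v"
  proof (cases "b = 0")
    case False
    show ?thesis
      by (rule exI[of _ "vector [b, \<mu> - a]"])
        (use False char in \<open>simp add: vec2_eq_iff mat2_mult_vector algebra_simps power2_eq_square\<close>)
  next
    case True
    with char have "(\<mu> - a) * (\<mu> - d) = 0"
      by (simp add: algebra_simps power2_eq_square)
    show ?thesis
    proof (cases "\<mu> = d")
      case True
      show ?thesis
        by (rule exI[of _ "vector [0, 1]"])
          (use \<open>b = 0\<close> True in \<open>simp add: vec2_eq_iff mat2_mult_vector\<close>)
    next
      case False
      with \<open>(\<mu> - a) * (\<mu> - d) = 0\<close> have "\<mu> = a" by simp
      show ?thesis
        by (rule exI[of _ "vector [a - d, c]"])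
          (use \<open>b = 0\<close> \<open>\<mu> = a\<close> False in \<open>simp add: vec2_eq_iff mat2_mult_vector algebra_simps\<close>)
    qed
  qed
  then show "\<mu> \<in> eigenvalues2 (mat2 a b c d)"
    unfolding eigenvalues2_def by blast
qed

lemma mat2_eigenvector:
  assumes "b \<noteq> 0" and "\<mu>^2 - (a + d) * \<mu> + (a*d - b*c) = 0"
  shows "mat2 a b c d *v vector [1, (\<mu> - a) / b] = \<mu> *s vector [1, (\<mu> - a) / b]"
proof -
  have "c + d * ((\<mu> - a) / b) = \<mu> * ((\<mu> - a) / b)"
    using assms by (simp add: field_simps power2_eq_square)
  then show ?thesis
    using assms(1) by (simp add: vec2_eq_iff mat2_mult_vector)
qed

lemma quadratic_eq_zero_iff:
  fixes x r s :: "'a::idom"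
  shows "x^2 - (r + s) * x + r * s = 0 \<longleftrightarrow> x = r \<or> x = s"
proof -
  have "x^2 - (r + s) * x + r * s = (x - r) * (x - s)"
    by (simp add: algebra_simps power2_eq_square)
  then show ?thesis
    by simp
qed

lemma reciprocal_root_pair:
  fixes T :: real
  assumes "2 < T"
  defines "l \<equiv> (T - sqrt (T^2 - 4)) / 2"
  shows "0 < l" and "l < 1" and "l + inverse l = T"
proof -
  define s where "s = sqrt (T^2 - 4)"
  have "4 < T^2"
    using power_strict_mono[of 2 T 2] assms by simp
  then have s_sq: "s^2 = T^2 - 4" and "0 < s"
    by (simp_all add: s_def)
  have "s < T"
    by (rule power_less_imp_less_base[of _ 2]) (use s_sq assms in auto)
  have prod: "l * ((T + s) / 2) = 1"
    unfolding l_def s_def[symmetric] using s_sq by (simp add: field_simps power2_eq_square)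
  show "0 < l"
    using \<open>s < T\<close> by (simp add: l_def s_def[symmetric])
  then have "inverse l = (T + s) / 2"
    using prod by (simp add: field_simps)
  then show "l + inverse l = T"
    by (simp add: l_def s_def[symmetric] field_simps)
  have "(T - 2)^2 < s^2"
    using s_sq assms by (simp add: power2_eq_square algebra_simps)
  then have "T - 2 < s"
    by (rule power_less_imp_less_base) (use \<open>0 < s\<close> in simp)
  then show "l < 1"
    by (simp add: l_def s_def[symmetric])
qed

lemma reciprocal_pair_bounds:
  fixes x y :: real
  assumes "x * y = 1" and "x + y < 0"
  shows "x < y \<Longrightarrow> x < -1" and "y < x \<Longrightarrow> -1 < x \<and> x < 0"
proof -
  have "x < 0"
  proof (rule ccontr)
    assume "\<not> x < 0"
    then have "x * y \<le> 0"
      using assms(2) by (intro mult_nonneg_nonpos) auto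
    with assms(1) show False by simp
  qed
  have "(x + 1) * (x - 1) = x * x - x * y"
    using assms(1) by (simp add: algebra_simps)
  also have "\<dots> = x * (x - y)"
    by (simp add: algebra_simps)
  finally have factor: "(x + 1) * (x - 1) = x * (x - y)" .
  show "x < -1" if "x < y"
  proof -
    have "0 < (x + 1) * (x - 1)"
      unfolding factor using \<open>x < 0\<close> that by (simp add: mult_neg_neg)
    then show ?thesis
      using \<open>x < 0\<close> by (simp add: zero_less_mult_iff)
  qed
  show "-1 < x \<and> x < 0" if "y < x"
  proof -
    have "(x + 1) * (x - 1) < 0"
      unfolding factor using \<open>x < 0\<close> that by (simp add: mult_neg_pos)
    then show ?thesis
      using \<open>x < 0\<close> by (simp add: mult_less_0_iff)
  qed
qed

lemma reciprocal_eigenvector_slopes: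
  fixes a b d l :: real
  assumes det: "a * d + b^2 = 1" and sign: "(d - a) * b < 0"
    and "0 < l" "l < 1" and sum_l: "l + inverse l = a + d"
  defines "f \<equiv> (l - a) / b" and "f' \<equiv> (inverse l - a) / b"
  shows "inverse f = f'" and "b > 0 \<Longrightarrow> f < -1" and "b < 0 \<Longrightarrow> -1 < f \<and> f < 0"
proof -
  have "b \<noteq> 0"
    using sign by auto
  have "f * f' = (l * inverse l - a * (l + inverse l) + a^2) / b^2"
    by (simp add: f_def f'_def field_simps power2_eq_square)
  also have "\<dots> = (1 - a * d) / b^2"
    using \<open>0 < l\<close> by (simp add: sum_l algebra_simps power2_eq_square)
  also have "\<dots> = 1"
    using \<open>b \<noteq> 0\<close> det by (simp add: field_simps)
  finally have "f * f' = 1" .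
  then show "inverse f = f'"
    by (simp add: inverse_unique)
  have "f + f' = (l + inverse l - 2 * a) / b"
    by (simp add: f_def f'_def add_divide_distrib diff_divide_distrib)
  also have "\<dots> = (d - a) / b"
    by (simp add: sum_l)
  finally have "f + f' < 0"
    using sign by (simp add: divide_less_0_iff mult_less_0_iff)
  have "l < inverse l"
    using \<open>0 < l\<close> \<open>l < 1\<close> one_less_inverse by fastforce
  then have "b > 0 \<Longrightarrow> f < f'" and "b < 0 \<Longrightarrow> f' < f"
    by (simp_all add: f_def f'_def divide_strict_right_mono divide_strict_right_mono_neg)
  then show "b > 0 \<Longrightarrow> f < -1" and "b < 0 \<Longrightarrow> -1 < f \<and> f < 0"
    using reciprocal_pair_bounds[OF \<open>f * f' = 1\<close> \<open>f + f' < 0\<close>] by auto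
qed

lemma det_one_mat2_eigen:
  fixes a b d l :: real
  assumes det: "a * d + b^2 = 1" and "b \<noteq> 0" and "0 < l" and sum_l: "l + inverse l = a + d"
  defines "M \<equiv> mat2 (of_real a) (of_real b) (of_real (- b)) (of_real d)"
  shows "eigenvalues2 M = {of_real l, of_real (inverse l)}"
    and "\<mu> = l \<or> \<mu> = inverse l \<Longrightarrow>
      M *v vector [1, of_real ((\<mu> - a) / b)] = of_real \<mu> *s vector [1, of_real ((\<mu> - a) / b)]"
proof -
  have char: "\<mu>^2 - (of_real a + of_real d) * \<mu> + (of_real a * of_real d - of_real b * of_real (- b))
      = \<mu>^2 - (of_real l + of_real (inverse l)) * \<mu> + of_real l * of_real (inverse l)" for \<mu> :: complex
  proof -
    have "complex_of_real a + of_real d = of_real l + of_real (inverse l)"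
      by (metis sum_l of_real_add)
    moreover have "complex_of_real a * of_real d - of_real b * of_real (- b) = of_real (a * d + b^2)"
      by (simp add: power2_eq_square)
    moreover have "complex_of_real (a * d + b^2) = of_real l * of_real (inverse l)"
      using det \<open>0 < l\<close> by simp
    ultimately show ?thesis
      by simp
  qed
  show eigenvalues: "eigenvalues2 M = {of_real l, of_real (inverse l)}"
    unfolding M_def eigenvalues2_mat2 char quadratic_eq_zero_iff by blast
  assume "\<mu> = l \<or> \<mu> = inverse l"
  then have "of_real \<mu> \<in> eigenvalues2 M"
    using eigenvalues by auto
  then show "M *v vector [1, of_real ((\<mu> - a) / b)] = of_real \<mu> *s vector [1, of_real ((\<mu> - a) / b)]"
    using mat2_eigenvector[of "of_real b" "of_real \<mu>"] \<open>b \<noteq> 0\<close>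
    by (simp add: M_def eigenvalues2_mat2)
qed

lemma det_one_mat2_spectrum:
  fixes a b d :: real
  assumes det: "a * d + b^2 = 1" and trace: "2 < a + d" and sign: "(d - a) * b < 0"
  defines "f \<equiv> (- a + d - sqrt ((a - d)^2 - 4 * b^2)) / (2 * b)"
  defines "M \<equiv> mat2 (of_real a) (of_real b) (of_real (- b)) (of_real d)"
  shows "\<exists>l1 l2 :: real.
           0 < l1 \<and> l1 < 1 \<and> l2 = inverse l1 \<and> l2 > 1 \<and>
           eigenvalues2 M = {complex_of_real l1, complex_of_real l2} \<and>
           M *v vector [1, complex_of_real f] = complex_of_real l1 *s vector [1, complex_of_real f] \<and>
           M *v vector [1, complex_of_real (inverse f)]
             = complex_of_real l2 *s vector [1, complex_of_real (inverse f)] \<and>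
           (b > 0 \<longrightarrow> f < -1) \<and> (b < 0 \<longrightarrow> -1 < f \<and> f < 0)"
proof -
  define l where "l = (a + d - sqrt ((a + d)^2 - 4)) / 2"
  have "0 < l" "l < 1" and sum_l: "l + inverse l = a + d"
    using reciprocal_root_pair[OF trace] by (simp_all add: l_def)
  have "b \<noteq> 0"
    using sign by auto
  have "(a - d)^2 - 4 * b^2 = (a + d)^2 - 4"
    using det by (simp add: power2_eq_square algebra_simps)
  then have f_eq: "f = (l - a) / b"
    using \<open>b \<noteq> 0\<close> by (simp add: f_def l_def field_simps)
  note slopes = reciprocal_eigenvector_slopes[OF det sign \<open>0 < l\<close> \<open>l < 1\<close> sum_l, folded f_eq]
  note eigen = det_one_mat2_eigen[OF det \<open>b \<noteq> 0\<close> \<open>0 < l\<close> sum_l, folded M_def]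
  have "1 < inverse l"
    using \<open>0 < l\<close> \<open>l < 1\<close> by (simp add: one_less_inverse)
  then show ?thesis
    using \<open>0 < l\<close> \<open>l < 1\<close> slopes eigen(1) eigen(2)[of l] eigen(2)[of "inverse l"]
    by (intro exI[of _ l] exI[of _ "inverse l"]) (simp add: f_eq)
qed

lemma Pmat_zero:
  assumes "b > 0" "b + e > 0"
  shows "Pmat b e 0 = mat2 (of_real (alpha b e)) (of_real (beta b e)) (of_real (- beta b e)) (of_real (gamma b e))"
proof -
  define B where "B = complex_of_real b"
  define C where "C = complex_of_real (b + e)"
  have "B \<noteq> 0" "C \<noteq> 0"
    unfolding B_def C_def of_real_eq_0_iff using assms by simp_all
  have t: "complex_of_real (tpar b e) = C / B"
    by (simp add: tpar_def B_def C_def)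
  have "Pmat b e 0 = - (matrix_inv (mat2 (-C) (-B) 0 (-B)) ** mat2 (-B) 0 (-C) (-B)
      ** matrix_inv (mat2 (-B) (-B) 0 (-C)) ** mat2 (-C) 0 (-B) (-B)
      ** matrix_inv (mat2 (-B) (-C) 0 (-B)) ** mat2 (-B) 0 (-B) (-C))"
    by (simp add: Pmat_def A1_def A2_def A3_def A4_def A5_def A6_def B_def C_def)
  also have "\<dots> = mat2 (of_real (alpha b e)) (of_real (beta b e)) (of_real (- beta b e)) (of_real (gamma b e))"
    using \<open>B \<noteq> 0\<close> \<open>C \<noteq> 0\<close>
    by (simp add: matrix_inv_mat2 mat2_mult uminus_mat2 mat2_eq_iff alpha_def beta_def gamma_def Let_def t,
        simp add: field_simps, intro conjI; algebra)
  finally show ?thesis .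
qed

lemma tpar_pos: "0 < b \<Longrightarrow> 0 < b + e \<Longrightarrow> 0 < tpar b e"
  by (simp add: tpar_def)

lemma tpar_less_one_iff: "0 < b \<Longrightarrow> tpar b e < 1 \<longleftrightarrow> e < 0"
  by (simp add: tpar_def divide_less_eq)

lemma one_less_tpar_iff: "0 < b \<Longrightarrow> 1 < tpar b e \<longleftrightarrow> 0 < e"
  by (simp add: tpar_def less_divide_eq)

lemma alpha_beta_gamma_eq:
  fixes b e :: real
  defines "t \<equiv> tpar b e"
  assumes "t \<noteq> 0"
  shows "alpha b e = (- (t^4) + 2 * t^3 - 4 * t + 4) / t^2"
    and "beta b e = (1 - t) * (t^3 - t + 2) / t"
    and "gamma b e = t^4 - t^2 + 2 * t - 1"
  using assms
  by (simp_all add: alpha_def beta_def gamma_def Let_def t_def[symmetric] field_simps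
      power2_eq_square power3_eq_cube power4_eq_xxxx)

lemma alpha_mult_gamma_add_beta_sq:
  assumes "tpar b e \<noteq> 0"
  shows "alpha b e * gamma b e + (beta b e)^2 = 1"
  using assms by (simp add: alpha_beta_gamma_eq field_simps) algebra

lemma alpha_add_gamma_gt_two:
  assumes "0 < tpar b e" and "tpar b e \<noteq> 1"
  shows "2 < alpha b e + gamma b e"
proof -
  define t where "t = tpar b e"
  have "alpha b e + gamma b e - 2 = (t - 1)^2 * (t^4 + 2 * t^3 + t^2 + 4 * t + 4) / t^2"
    using assms by (simp add: alpha_beta_gamma_eq t_def[symmetric] field_simps) algebra
  moreover have "0 < (t - 1)^2 * (t^4 + 2 * t^3 + t^2 + 4 * t + 4) / t^2"
    using assms by (simp add: t_def[symmetric] add_pos_pos)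
  ultimately show ?thesis
    by simp
qed

lemma cube_minus_self_add_two_pos:
  fixes t :: real
  assumes "0 < t"
  shows "0 < t^3 - t + 2"
proof -
  have "t^3 - t + 2 = t * (t - 1)^2 + t^2 + (t - 1)^2 + 1"
    by (simp add: power2_eq_square power3_eq_cube algebra_simps)
  moreover have "0 \<le> t * (t - 1)^2 + t^2 + (t - 1)^2"
    using assms by simp
  ultimately show ?thesis
    by linarith
qed

lemma beta_pos_iff:
  assumes "0 < tpar b e"
  shows "0 < beta b e \<longleftrightarrow> tpar b e < 1"
  using assms cube_minus_self_add_two_pos[OF assms]
  by (simp add: alpha_beta_gamma_eq zero_less_divide_iff zero_less_mult_iff)

lemma beta_neg_iff:
  assumes "0 < tpar b e"
  shows "beta b e < 0 \<longleftrightarrow> 1 < tpar b e"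
  using assms cube_minus_self_add_two_pos[OF assms]
  by (simp add: alpha_beta_gamma_eq divide_less_0_iff mult_less_0_iff)

lemma gamma_minus_alpha_mult_beta_neg:
  assumes "0 < tpar b e" and "tpar b e \<noteq> 1"
  shows "(gamma b e - alpha b e) * beta b e < 0"
proof -
  define t where "t = tpar b e"
  have "(gamma b e - alpha b e) * beta b e
      = - ((t - 1)^2 * (t^2 * (t + 1) * (t^2 + 1) + 4) * (t^3 - t + 2) / t^3)"
    using assms by (simp add: alpha_beta_gamma_eq t_def[symmetric] field_simps) algebra
  moreover have "0 < (t - 1)^2 * (t^2 * (t + 1) * (t^2 + 1) + 4) * (t^3 - t + 2) / t^3"
    using assms cube_minus_self_add_two_pos[of t] by (simp add: t_def[symmetric] add_pos_pos)
  ultimately show ?thesis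
    by linarith
qed

theorem theorem8:
  fixes b \<epsilon> :: real
  assumes "b > 0" and "b + \<epsilon> > 0" and "\<epsilon> \<noteq> 0"
  shows "\<exists>l1 l2 :: real.
           0 < l1 \<and> l1 < 1 \<and> l2 = inverse l1 \<and> l2 > 1 \<and>
           eigenvalues2 (Pmat b \<epsilon> 0) = {complex_of_real l1, complex_of_real l2} \<and>
           Pmat b \<epsilon> 0 *v vector [1, complex_of_real (f1 b \<epsilon>)]
             = complex_of_real l1 *s vector [1, complex_of_real (f1 b \<epsilon>)] \<and>
           Pmat b \<epsilon> 0 *v vector [1, complex_of_real (inverse (f1 b \<epsilon>))]
             = complex_of_real l2 *s vector [1, complex_of_real (inverse (f1 b \<epsilon>))] \<and>
           (\<epsilon> < 0 \<longrightarrow> f1 b \<epsilon> < -1) \<and>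
           (\<epsilon> > 0 \<longrightarrow> -1 < f1 b \<epsilon> \<and> f1 b \<epsilon> < 0)"
proof -
  have t_pos: "0 < tpar b \<epsilon>"
    using assms(1,2) by (rule tpar_pos)
  have t_ne_1: "tpar b \<epsilon> \<noteq> 1"
    using assms(1,3) by (simp add: tpar_def)
  have det: "alpha b \<epsilon> * gamma b \<epsilon> + (beta b \<epsilon>)^2 = 1"
    using t_pos by (simp add: alpha_mult_gamma_add_beta_sq)
  have trace: "2 < alpha b \<epsilon> + gamma b \<epsilon>"
    using t_pos t_ne_1 by (rule alpha_add_gamma_gt_two)
  have sign: "(gamma b \<epsilon> - alpha b \<epsilon>) * beta b \<epsilon> < 0"
    using t_pos t_ne_1 by (rule gamma_minus_alpha_mult_beta_neg)
  have "\<epsilon> < 0 \<longleftrightarrow> 0 < beta b \<epsilon>" and "0 < \<epsilon> \<longleftrightarrow> beta b \<epsilon> < 0"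
    using t_pos assms(1)
    by (simp_all add: beta_pos_iff beta_neg_iff tpar_less_one_iff one_less_tpar_iff)
  then show ?thesis
    using det_one_mat2_spectrum[OF det trace sign]
    unfolding Pmat_zero[OF assms(1,2)] f1_def by simp
qed

end
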